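(* There exists a constant $c$ such that $\alpha_k(m)\le m^c$ for all $k,m\in\mathbf N$.
   Context: For $k,m\in\mathbf N=\{1,2,\dots\}$, $\alpha_k(m)$ is the number of $k$-tuples $(m_1,\dots,m_k)$ of integers $m_i\ge2$ with $m_1m_2\cdots m_k=m$. *)

theory Defs
  imports Complex_Main
begin

definition alpha :: "nat \<Rightarrow> nat \<Rightarrow> nat" where
  "alpha k m = card {xs :: nat list. length xs = k \<and> (\<forall>x\<in>set xs. 2 \<le> x) \<and> prod_list xs = m}"

end

theory Submission
  imports Defs
begin

text \<open>Splitting off the first factor gives the recursion
  \<open>alpha (k + 1) m = \<Sum>{alpha k (m div d) | d dvd m, d \<ge> 2}\<close>. Hence \<open>alpha k m \<le> m\<^sup>2\<close> by
  induction on \<open>k\<close>, since the sum of \<open>(m / d)\<^sup>2\<close> over \<open>d \<ge> 2\<close> is at most \<open>m\<^sup>2\<close> times the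
  telescoping sum of \<open>1 / (d (d - 1))\<close>, which equals 1. So \<open>c = 2\<close> works.\<close>

lemma sum_inverse_consecutive_products:
  assumes "n \<ge> 1"
  shows "(\<Sum>d=2..n. 1 / (real d * (real d - 1))) = 1 - 1 / real n"
  using assms
proof (induction n rule: dec_induct)
  case base
  then show ?case by simp
next
  case (step n)
  have "{2..Suc n} = insert (Suc n) {2..n}" using step by auto
  then have "(\<Sum>d=2..Suc n. 1 / (real d * (real d - 1))) = 1 / (real (Suc n) * real n) + (1 - 1 / real n)"
    using step by simp
  also have "\<dots> = 1 - 1 / real (Suc n)"
    using step(1) by (simp add: field_simps add_nonneg_eq_0_iff)
  finally show ?case .
qed

lemma sum_square_quotients_le: "(\<Sum>d=2..m. (m div d) ^ 2) \<le> (m::nat) ^ 2"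
proof (cases "m = 0")
  case False
  then have m: "m \<ge> 1" by simp
  have "real (\<Sum>d=2..m. (m div d) ^ 2) = (\<Sum>d=2..m. real (m div d) ^ 2)" by simp
  also have "\<dots> \<le> (\<Sum>d=2..m. real m ^ 2 * (1 / (real d * (real d - 1))))"
  proof (rule sum_mono)
    fix d assume d: "d \<in> {2..m}"
    have "real (m div d) * real d \<le> real m"
      by (metis div_times_less_eq_dividend of_nat_le_iff of_nat_mult)
    then have "real (m div d) \<le> real m / real d" using d by (simp add: le_divide_eq)
    then have "real (m div d) ^ 2 \<le> (real m / real d) ^ 2"
      by (simp add: power_mono)
    also have "\<dots> = real m ^ 2 / (real d * real d)"
      by (simp add: power2_eq_square)
    also have "\<dots> \<le> real m ^ 2 / (real d * (real d - 1))"
      using d by (intro divide_left_mono) auto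
    finally show "real (m div d) ^ 2 \<le> real m ^ 2 * (1 / (real d * (real d - 1)))" by simp
  qed
  also have "\<dots> = real m ^ 2 * (1 - 1 / real m)"
    by (simp only: sum_distrib_left[symmetric] sum_inverse_consecutive_products[OF m])
  also have "\<dots> \<le> real m ^ 2" using m by (simp add: mult_left_le)
  finally show ?thesis by (metis of_nat_le_iff of_nat_power)
qed simp

definition factorizations :: "nat \<Rightarrow> nat \<Rightarrow> nat list set" where
  "factorizations k m = {xs. length xs = k \<and> (\<forall>x\<in>set xs. 2 \<le> x) \<and> prod_list xs = m}"

lemma alpha_eq_card_factorizations: "alpha k m = card (factorizations k m)"
  by (simp add: alpha_def factorizations_def)

lemma factorizations_0: "factorizations 0 m = (if m = 1 then {[]} else {})"
  by (auto simp: factorizations_def)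

lemma factorizations_of_0: "factorizations k 0 = {}"
  using not_numeral_le_zero by (fastforce simp: factorizations_def prod_list_zero_iff)

lemma finite_factorizations: "finite (factorizations k m)"
proof (rule finite_subset)
  show "factorizations k m \<subseteq> {xs. set xs \<subseteq> {..m} \<and> length xs = k}"
  proof
    fix xs assume xs: "xs \<in> factorizations k m"
    then have "m \<noteq> 0" by (cases m) (auto simp: factorizations_of_0)
    with xs have "\<forall>x\<in>set xs. x \<le> m"
      by (auto simp: factorizations_def intro: dvd_imp_le prod_list_dvd)
    with xs show "xs \<in> {xs. set xs \<subseteq> {..m} \<and> length xs = k}"
      by (auto simp: factorizations_def)
  qed
qed (rule finite_lists_length_eq, simp)

lemma factorizations_Suc:
  "factorizations (Suc k) m = (\<Union>d\<in>{d. d dvd m \<and> 2 \<le> d}. (#) d ` factorizations k (m div d))"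
proof (intro equalityI subsetI)
  fix ys assume "ys \<in> factorizations (Suc k) m"
  then obtain d xs where "ys = d # xs" "2 \<le> d" "d * prod_list xs = m"
    "xs \<in> factorizations k (prod_list xs)"
    by (cases ys) (auto simp: factorizations_def)
  moreover from this have "m div d = prod_list xs" by auto
  ultimately show "ys \<in> (\<Union>d\<in>{d. d dvd m \<and> 2 \<le> d}. (#) d ` factorizations k (m div d))"
    by (intro UN_I[of d] image_eqI[of _ _ xs]) auto
next
  fix ys assume "ys \<in> (\<Union>d\<in>{d. d dvd m \<and> 2 \<le> d}. (#) d ` factorizations k (m div d))"
  then obtain d xs where "ys = d # xs" "d dvd m" "2 \<le> d" "xs \<in> factorizations k (m div d)"
    by auto
  then show "ys \<in> factorizations (Suc k) m"
    by (auto simp: factorizations_def)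
qed

lemma alpha_Suc:
  assumes "m \<noteq> 0"
  shows "alpha (Suc k) m = (\<Sum>d | d dvd m \<and> 2 \<le> d. alpha k (m div d))"
proof -
  have "finite {d. d dvd m \<and> 2 \<le> d}"
    using assms by (auto intro: finite_subset[of _ "{..m}"] dvd_imp_le)
  then have "card (\<Union>d\<in>{d. d dvd m \<and> 2 \<le> d}. (#) d ` factorizations k (m div d))
      = (\<Sum>d | d dvd m \<and> 2 \<le> d. card ((#) d ` factorizations k (m div d)))"
    by (intro card_UN_disjoint) (auto simp: finite_factorizations)
  then show ?thesis
    by (simp add: alpha_eq_card_factorizations factorizations_Suc card_image)
qed

lemma alpha_le_square: "alpha k m \<le> m ^ 2"
proof (induction k arbitrary: m)
  case 0
  then show ?case by (simp add: alpha_eq_card_factorizations factorizations_0)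
next
  case (Suc k)
  show ?case
  proof (cases "m = 0")
    case True
    then show ?thesis by (simp add: alpha_eq_card_factorizations factorizations_of_0)
  next
    case False
    have divisors: "{d. d dvd m \<and> 2 \<le> d} \<subseteq> {2..m}"
      using False by (auto dest: dvd_imp_le)
    have "alpha (Suc k) m = (\<Sum>d | d dvd m \<and> 2 \<le> d. alpha k (m div d))"
      using False by (rule alpha_Suc)
    also have "\<dots> \<le> (\<Sum>d | d dvd m \<and> 2 \<le> d. (m div d) ^ 2)"
      by (intro sum_mono Suc.IH)
    also have "\<dots> \<le> (\<Sum>d=2..m. (m div d) ^ 2)"
      by (rule sum_mono2[OF _ divisors]) auto
    also have "\<dots> \<le> m ^ 2"
      by (rule sum_square_quotients_le)
    finally show ?thesis .
  qed
qed

theorem lemma4p3: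
  shows "\<exists>c::real. \<forall>k m :: nat. k \<ge> 1 \<longrightarrow> m \<ge> 1 \<longrightarrow> real (alpha k m) \<le> real m powr c"
proof (intro exI[of _ 2] allI impI)
  fix k m :: nat assume "m \<ge> 1"
  have "real (alpha k m) \<le> real m ^ 2"
    using alpha_le_square by (metis of_nat_le_iff of_nat_power)
  also have "\<dots> = real m powr 2"
    using \<open>m \<ge> 1\<close> by (simp add: powr_realpow)
  finally show "real (alpha k m) \<le> real m powr 2" .
qed

end
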